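(* Let $G$ be a group and $S(X)=1$ a system of equations over $G$ which has a solution in $G$. For an arbitrary system $T(X,Y)=1$ over $G$ the following are equivalent: (1) $T(X,Y)=1$ is compatible with $S(X)=1$ and admits an $S$-lift over $G$; (2) $G_{R(S)}$ is a retract of $G_{R(S\cup T)}$, i.e. $G_{R(S)}$ is (canonically) a subgroup of $G_{R(S\cup T)}$ and there is a $G_{R(S)}$-homomorphism $G_{R(S\cup T)}\to G_{R(S)}$.
   Context: $G[Z]=G*F(Z)$; for a system $S$ in variables $Z$ over $G$, $R(S)$ is the intersection of the kernels of all $G$-homomorphisms $G[Z]\to G$ killing $S$ (or $G[Z]$ if none), and $G_{R(S)}=G[Z]/R(S)$; $\mu:X\to G_{R(S)}$ is the canonical map. $T=1$ is compatible with $S=1$ over $G$ if for every solution $U$ of $S=1$ in $G$, $T(U,Y)=1$ has a solution in $G$; it admits an $S$-lift if $T(X^\mu,Y)=1$ has a solution in $G_{R(S)}$. *)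

theory Defs
  imports "HOL-Algebra.Algebra"
begin

text \<open>Terms of the free product G[Z] = G * F(Z): words built from constants of G,
  variables, products, inverses and the identity.\<close>
datatype ('g, 'z) gterm =
    Const 'g
  | Var 'z
  | Mult "('g, 'z) gterm" "('g, 'z) gterm"
  | Inv "('g, 'z) gterm"
  | One

fun wf_term :: "('g, 'b) monoid_scheme \<Rightarrow> ('g, 'z) gterm \<Rightarrow> bool" where
  "wf_term G (Const g) = (g \<in> carrier G)"
| "wf_term G (Var z) = True"
| "wf_term G (Mult t u) = (wf_term G t \<and> wf_term G u)"
| "wf_term G (Inv t) = wf_term G t"
| "wf_term G One = True"

fun geval :: "('h, 'b) monoid_scheme \<Rightarrow> ('g \<Rightarrow> 'h) \<Rightarrow> ('z \<Rightarrow> 'h) \<Rightarrow> ('g, 'z) gterm \<Rightarrow> 'h" where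
  "geval H c a (Const g) = c g"
| "geval H c a (Var z) = a z"
| "geval H c a (Mult t u) = geval H c a t \<otimes>\<^bsub>H\<^esub> geval H c a u"
| "geval H c a (Inv t) = inv\<^bsub>H\<^esub> (geval H c a t)"
| "geval H c a One = \<one>\<^bsub>H\<^esub>"

text \<open>U is a solution in G of the system S (every G-homomorphism G[Z] \<rightarrow> G is
  evaluation at some assignment U of the variables).\<close>
definition is_solution :: "('g, 'b) monoid_scheme \<Rightarrow> ('g, 'z) gterm set \<Rightarrow> ('z \<Rightarrow> 'g) \<Rightarrow> bool" where
  "is_solution G S U \<longleftrightarrow> (\<forall>z. U z \<in> carrier G) \<and> (\<forall>s\<in>S. geval G id U s = \<one>\<^bsub>G\<^esub>)"

text \<open>The relation "t u^{-1} \<in> R(S)" on well-formed terms: R(S) is the intersection of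
  the kernels of all G-homomorphisms killing S (everything if there are none).\<close>
definition rad_rel :: "('g, 'b) monoid_scheme \<Rightarrow> ('g, 'z) gterm set \<Rightarrow> (('g, 'z) gterm \<times> ('g, 'z) gterm) set" where
  "rad_rel G S = {(t, u). wf_term G t \<and> wf_term G u \<and>
      (\<forall>U. is_solution G S U \<longrightarrow> geval G id U t = geval G id U u)}"

definition coord_group :: "('g, 'b) monoid_scheme \<Rightarrow> ('g, 'z) gterm set \<Rightarrow> ('g, 'z) gterm set monoid" where
  "coord_group G S =
     \<lparr> carrier = {t. wf_term G t} // rad_rel G S,
       monoid.mult = (\<lambda>A B. rad_rel G S `` {Mult (SOME t. t \<in> A) (SOME u. u \<in> B)}),
       monoid.one = rad_rel G S `` {One} \<rparr>"

definition cls :: "('g, 'b) monoid_scheme \<Rightarrow> ('g, 'z) gterm set \<Rightarrow> ('g, 'z) gterm \<Rightarrow> ('g, 'z) gterm set" where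
  "cls G S t = rad_rel G S `` {t}"

text \<open>The system S \<union> T in variables X \<union> Y (X = Inl, Y = Inr).\<close>
definition union_sys :: "('g, 'x) gterm set \<Rightarrow> ('g, 'x + 'y) gterm set \<Rightarrow> ('g, 'x + 'y) gterm set" where
  "union_sys S T = map_gterm id Inl ` S \<union> T"

definition canon_map :: "('g, 'b) monoid_scheme \<Rightarrow> ('g, 'x) gterm set \<Rightarrow> ('g, 'x + 'y) gterm set
     \<Rightarrow> ('g, 'x) gterm set \<Rightarrow> ('g, 'x + 'y) gterm set" where
  "canon_map G S T A = cls G (union_sys S T) (map_gterm id Inl (SOME t. t \<in> A))"

definition compatible :: "('g, 'b) monoid_scheme \<Rightarrow> ('g, 'x) gterm set \<Rightarrow> ('g, 'x + 'y) gterm set \<Rightarrow> bool" where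
  "compatible G S T \<longleftrightarrow>
     (\<forall>U. is_solution G S U \<longrightarrow>
        (\<exists>V. (\<forall>y. V y \<in> carrier G) \<and> (\<forall>t\<in>T. geval G id (case_sum U V) t = \<one>\<^bsub>G\<^esub>)))"

text \<open>T admits an S-lift: T(X^\<mu>, Y) = 1 has a solution in G_{R(S)}.\<close>
definition admits_lift :: "('g, 'b) monoid_scheme \<Rightarrow> ('g, 'x) gterm set \<Rightarrow> ('g, 'x + 'y) gterm set \<Rightarrow> bool" where
  "admits_lift G S T \<longleftrightarrow>
     (\<exists>W. (\<forall>y. W y \<in> carrier (coord_group G S)) \<and>
        (\<forall>t\<in>T. geval (coord_group G S) (\<lambda>g. cls G S (Const g))
                  (case_sum (\<lambda>x. cls G S (Var x)) W) t = \<one>\<^bsub>coord_group G S\<^esub>))"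

end

theory Submission
  imports Defs
begin

text \<open>
  A substitution of terms for variables which pulls solutions of \<open>S\<close> back to solutions of \<open>S'\<close>
  induces a \<open>G\<close>-homomorphism \<open>G_{R(S')} \<rightarrow> G_{R(S)}\<close>, and every \<open>G\<close>-homomorphism between
  coordinate groups is induced by the images of the variables. A lift \<open>W\<close> gives the substitution \<open>X \<mapsto> X, Y \<mapsto> W\<close>, which turns solutions of \<open>S\<close>
  into solutions of \<open>S \<union> T\<close> (this is compatibility) and therefore induces a left inverse of
  the canonical map, which is thus injective. Conversely, a left inverse \<open>\<phi>\<close> yields the lift
  \<open>Y \<mapsto> \<phi>(Y)\<close>.
\<close>

fun subst :: "('z \<Rightarrow> ('g, 'w) gterm) \<Rightarrow> ('g, 'z) gterm \<Rightarrow> ('g, 'w) gterm" where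
  "subst f (Const g) = Const g"
| "subst f (Var z) = f z"
| "subst f (Mult t u) = Mult (subst f t) (subst f u)"
| "subst f (Inv t) = Inv (subst f t)"
| "subst f One = One"

lemma subst_Var [simp]: "subst Var t = t"
  by (induction t) auto

lemma subst_subst: "subst f (subst g t) = subst (\<lambda>z. subst f (g z)) t"
  by (induction t) auto

lemma map_gterm_id_eq_subst: "map_gterm id h t = subst (Var \<circ> h) t"
  by (induction t) auto

lemma wf_term_subst: "wf_term G t \<Longrightarrow> (\<And>z. wf_term G (f z)) \<Longrightarrow> wf_term G (subst f t)"
  by (induction t) auto

lemma geval_subst: "geval H c a (subst f t) = geval H c (\<lambda>z. geval H c a (f z)) t"
  by (induction t) auto

lemma geval_case_sum_Var [simp]:
  "geval H c a (case_sum Var w z) = case_sum a (\<lambda>y. geval H c a (w y)) z"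
  by (cases z) auto

lemma geval_cong:
  "wf_term G t \<Longrightarrow> (\<And>g. g \<in> carrier G \<Longrightarrow> c g = c' g) \<Longrightarrow> (\<And>z. a z = a' z) \<Longrightarrow>
   geval H c a t = geval H c' a' t"
  by (induction t) auto

lemma (in group) geval_closed:
  "wf_term K t \<Longrightarrow> (\<And>g. g \<in> carrier K \<Longrightarrow> c g \<in> carrier G) \<Longrightarrow> (\<And>z. a z \<in> carrier G) \<Longrightarrow>
   geval G c a t \<in> carrier G"
  by (induction t) auto

lemma (in group_hom) hom_geval:
  "wf_term K t \<Longrightarrow> (\<And>g. g \<in> carrier K \<Longrightarrow> c g \<in> carrier G) \<Longrightarrow> (\<And>z. a z \<in> carrier G) \<Longrightarrow>
   h (geval G c a t) = geval H (h \<circ> c) (h \<circ> a) t"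
  by (induction t) (auto simp: G.geval_closed)

lemma is_solution_union_sys_iff:
  "is_solution G (union_sys S T) V \<longleftrightarrow>
   is_solution G S (V \<circ> Inl) \<and> (\<forall>y. V (Inr y) \<in> carrier G) \<and> (\<forall>t\<in>T. geval G id V t = \<one>\<^bsub>G\<^esub>)"
  unfolding is_solution_def union_sys_def map_gterm_id_eq_subst ball_Un Ball_image_comp
  by (auto simp: geval_subst split_sum_all comp_def)

context group
begin

lemma geval_solution_closed: "is_solution G S U \<Longrightarrow> wf_term G t \<Longrightarrow> geval G id U t \<in> carrier G"
  unfolding is_solution_def by (auto intro: geval_closed)

lemma equiv_rad_rel: "equiv {t. wf_term G t} (rad_rel G S)"
  by (rule equivI) (auto simp: rad_rel_def refl_on_def sym_def trans_def)

lemma cls_in_carrier: "wf_term G t \<Longrightarrow> cls G S t \<in> carrier (coord_group G S)"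
  unfolding cls_def coord_group_def by (auto intro: quotientI)

lemma coord_group_elemE:
  assumes "A \<in> carrier (coord_group G S)"
  obtains t where "wf_term G t" "A = cls G S t"
  using assms unfolding cls_def coord_group_def by (auto elim: quotientE)

lemma cls_eq_iff:
  "wf_term G t \<Longrightarrow> wf_term G u \<Longrightarrow>
   cls G S t = cls G S u \<longleftrightarrow> (\<forall>U. is_solution G S U \<longrightarrow> geval G id U t = geval G id U u)"
  unfolding cls_def using eq_equiv_class_iff[OF equiv_rad_rel] by (auto simp: rad_rel_def)

lemma cls_representative:
  assumes "wf_term G t"
  shows "wf_term G (SOME s. s \<in> cls G S t)" "cls G S (SOME s. s \<in> cls G S t) = cls G S t"
proof -
  have "t \<in> cls G S t"
    unfolding cls_def using equiv_class_self[OF equiv_rad_rel] assms by auto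
  then have "(SOME s. s \<in> cls G S t) \<in> cls G S t" by (rule someI)
  then show "wf_term G (SOME s. s \<in> cls G S t)" "cls G S (SOME s. s \<in> cls G S t) = cls G S t"
    unfolding cls_def using equiv_class_eq[OF equiv_rad_rel] by (auto simp: rad_rel_def)
qed

lemma mult_cls:
  assumes "wf_term G t" "wf_term G u"
  shows "cls G S t \<otimes>\<^bsub>coord_group G S\<^esub> cls G S u = cls G S (Mult t u)"
proof -
  let ?t = "SOME s. s \<in> cls G S t" and ?u = "SOME s. s \<in> cls G S u"
  have "cls G S t \<otimes>\<^bsub>coord_group G S\<^esub> cls G S u = cls G S (Mult ?t ?u)"
    unfolding coord_group_def cls_def by simp
  also have "\<dots> = cls G S (Mult t u)"
    using cls_representative[OF assms(1), of S] cls_representative[OF assms(2), of S] assms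
    by (simp add: cls_eq_iff)
  finally show ?thesis .
qed

lemma one_cls: "\<one>\<^bsub>coord_group G S\<^esub> = cls G S One"
  unfolding coord_group_def cls_def by simp

lemma group_coord_group: "group (coord_group G S)"
proof (rule groupI)
  fix A B C
  assume "A \<in> carrier (coord_group G S)" "B \<in> carrier (coord_group G S)"
    "C \<in> carrier (coord_group G S)"
  then obtain a b c where "wf_term G a" "wf_term G b" "wf_term G c"
    and "A = cls G S a" "B = cls G S b" "C = cls G S c"
    by (metis coord_group_elemE)
  then show "A \<otimes>\<^bsub>coord_group G S\<^esub> B \<in> carrier (coord_group G S)"
    and "A \<otimes>\<^bsub>coord_group G S\<^esub> B \<otimes>\<^bsub>coord_group G S\<^esub> C =
         A \<otimes>\<^bsub>coord_group G S\<^esub> (B \<otimes>\<^bsub>coord_group G S\<^esub> C)"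
    by (simp_all add: mult_cls cls_in_carrier cls_eq_iff m_assoc geval_solution_closed)
next
  fix A assume "A \<in> carrier (coord_group G S)"
  then obtain a where a: "wf_term G a" "A = cls G S a" by (rule coord_group_elemE)
  then show "\<one>\<^bsub>coord_group G S\<^esub> \<otimes>\<^bsub>coord_group G S\<^esub> A = A"
    by (simp add: one_cls mult_cls cls_eq_iff geval_solution_closed)
  have "cls G S (Inv a) \<otimes>\<^bsub>coord_group G S\<^esub> A = \<one>\<^bsub>coord_group G S\<^esub>"
    using a by (simp add: one_cls mult_cls cls_eq_iff geval_solution_closed)
  then show "\<exists>B\<in>carrier (coord_group G S). B \<otimes>\<^bsub>coord_group G S\<^esub> A = \<one>\<^bsub>coord_group G S\<^esub>"
    using a cls_in_carrier[of "Inv a" S] by auto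
qed (simp add: one_cls cls_in_carrier)

lemma inv_cls: "wf_term G t \<Longrightarrow> inv\<^bsub>coord_group G S\<^esub> (cls G S t) = cls G S (Inv t)"
  by (rule group.inv_equality[OF group_coord_group])
    (simp_all add: one_cls mult_cls cls_eq_iff cls_in_carrier geval_solution_closed)

end

definition induced_map ::
    "('g, 'b) monoid_scheme \<Rightarrow> ('g, 'z) gterm set \<Rightarrow> ('g, 'w) gterm set \<Rightarrow>
     ('z \<Rightarrow> ('g, 'w) gterm) \<Rightarrow> ('g, 'z) gterm set \<Rightarrow> ('g, 'w) gterm set" where
  "induced_map G S' S f A = cls G S (subst f (SOME t. t \<in> A))"

lemma canon_map_eq_induced_map: "canon_map G S T = induced_map G S (union_sys S T) (Var \<circ> Inl)"
  by (simp add: fun_eq_iff canon_map_def induced_map_def map_gterm_id_eq_subst)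

context group
begin

lemma geval_coord_group:
  "wf_term G t \<Longrightarrow> (\<And>z. wf_term G (f z)) \<Longrightarrow>
   geval (coord_group G S) (\<lambda>g. cls G S (Const g)) (\<lambda>z. cls G S (f z)) t = cls G S (subst f t)"
  by (induction t) (auto simp: mult_cls inv_cls one_cls wf_term_subst)

lemma cls_eq_one_iff:
  "wf_term G t \<Longrightarrow>
   cls G S t = \<one>\<^bsub>coord_group G S\<^esub> \<longleftrightarrow> (\<forall>U. is_solution G S U \<longrightarrow> geval G id U t = \<one>)"
  by (simp add: one_cls cls_eq_iff)

lemma hom_coord_group_cls_subst:
  assumes \<phi>: "\<phi> \<in> hom (coord_group G S') (coord_group G S)"
    and const: "\<And>g. g \<in> carrier G \<Longrightarrow> \<phi> (cls G S' (Const g)) = cls G S (Const g)"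
    and var: "\<And>z. \<phi> (cls G S' (Var z)) = cls G S (f z)"
    and f: "\<And>z. wf_term G (f z)" and t: "wf_term G t"
  shows "\<phi> (cls G S' t) = cls G S (subst f t)"
proof -
  interpret \<phi>: group_hom "coord_group G S'" "coord_group G S" \<phi>
    using \<phi> by (simp add: group_hom_def group_hom_axioms_def group_coord_group)
  have "\<phi> (cls G S' t) =
      \<phi> (geval (coord_group G S') (\<lambda>g. cls G S' (Const g)) (\<lambda>z. cls G S' (Var z)) t)"
    using geval_coord_group[OF t, of Var] by simp
  also have "\<dots> = geval (coord_group G S) (\<lambda>g. \<phi> (cls G S' (Const g))) (\<lambda>z. \<phi> (cls G S' (Var z))) t"
    using \<phi>.hom_geval[OF t] by (simp add: cls_in_carrier comp_def)
  also have "\<dots> = geval (coord_group G S) (\<lambda>g. cls G S (Const g)) (\<lambda>z. cls G S (f z)) t"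
    using t by (rule geval_cong) (simp_all add: const var)
  also have "\<dots> = cls G S (subst f t)"
    using t f by (rule geval_coord_group)
  finally show ?thesis .
qed

lemma induced_map_cls:
  assumes pullback: "\<And>U. is_solution G S U \<Longrightarrow> is_solution G S' (\<lambda>z. geval G id U (f z))"
    and f: "\<And>z. wf_term G (f z)" and t: "wf_term G t"
  shows "induced_map G S' S f (cls G S' t) = cls G S (subst f t)"
proof -
  let ?r = "SOME s. s \<in> cls G S' t"
  have r: "wf_term G ?r" "cls G S' ?r = cls G S' t"
    using cls_representative[OF t] by auto
  have "geval G id U (subst f ?r) = geval G id U (subst f t)" if "is_solution G S U" for U
    using r t pullback[OF that] by (simp add: cls_eq_iff geval_subst)
  then have "cls G S (subst f ?r) = cls G S (subst f t)"
    using r(1) t f by (simp add: cls_eq_iff wf_term_subst)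
  then show ?thesis
    unfolding induced_map_def .
qed

lemma induced_map_hom:
  assumes pullback: "\<And>U. is_solution G S U \<Longrightarrow> is_solution G S' (\<lambda>z. geval G id U (f z))"
    and f: "\<And>z. wf_term G (f z)"
  shows "induced_map G S' S f \<in> hom (coord_group G S') (coord_group G S)"
proof (rule homI)
  fix A assume "A \<in> carrier (coord_group G S')"
  then obtain a where "wf_term G a" "A = cls G S' a" by (rule coord_group_elemE)
  then show "induced_map G S' S f A \<in> carrier (coord_group G S)"
    by (simp add: induced_map_cls[OF assms] cls_in_carrier wf_term_subst f)
next
  fix A B assume "A \<in> carrier (coord_group G S')" "B \<in> carrier (coord_group G S')"
  then obtain a b where "wf_term G a" "A = cls G S' a" "wf_term G b" "B = cls G S' b"
    by (metis coord_group_elemE)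
  then show "induced_map G S' S f (A \<otimes>\<^bsub>coord_group G S'\<^esub> B) =
      induced_map G S' S f A \<otimes>\<^bsub>coord_group G S\<^esub> induced_map G S' S f B"
    by (simp add: induced_map_cls[OF assms] mult_cls wf_term_subst f)
qed

lemma solution_restrict_union_sys:
  "is_solution G (union_sys S T) V \<Longrightarrow> is_solution G S (\<lambda>x. V (Inl x))"
  by (simp add: is_solution_union_sys_iff comp_def)

lemma canon_map_hom: "canon_map G S T \<in> hom (coord_group G S) (coord_group G (union_sys S T))"
  unfolding canon_map_eq_induced_map
  by (rule induced_map_hom) (simp_all add: solution_restrict_union_sys)

lemma canon_map_cls:
  "wf_term G a \<Longrightarrow> canon_map G S T (cls G S a) = cls G (union_sys S T) (subst (Var \<circ> Inl) a)"
  unfolding canon_map_eq_induced_map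
  by (rule induced_map_cls) (simp_all add: solution_restrict_union_sys)

lemma admits_lift_iff:
  assumes T: "\<forall>t\<in>T. wf_term G t"
  shows "admits_lift G S T \<longleftrightarrow>
    (\<exists>w. (\<forall>y. wf_term G (w y)) \<and>
         (\<forall>t\<in>T. cls G S (subst (case_sum Var w) t) = \<one>\<^bsub>coord_group G S\<^esub>))"
proof -
  have eval: "geval (coord_group G S) (\<lambda>g. cls G S (Const g))
        (case_sum (\<lambda>x. cls G S (Var x)) (\<lambda>y. cls G S (w y))) t = cls G S (subst (case_sum Var w) t)"
    if "t \<in> T" "\<forall>y. wf_term G (w y)" for t w
  proof -
    have "case_sum (\<lambda>x. cls G S (Var x)) (\<lambda>y. cls G S (w y)) = (\<lambda>z. cls G S (case_sum Var w z))"
      by (simp add: fun_eq_iff split: sum.split)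
    then show ?thesis
      using geval_coord_group[of t "case_sum Var w"] that T by (auto split: sum.split)
  qed
  show ?thesis
  proof
    assume "admits_lift G S T"
    then obtain W where W: "\<forall>y. W y \<in> carrier (coord_group G S)"
      and lift: "\<forall>t\<in>T. geval (coord_group G S) (\<lambda>g. cls G S (Const g))
                  (case_sum (\<lambda>x. cls G S (Var x)) W) t = \<one>\<^bsub>coord_group G S\<^esub>"
      unfolding admits_lift_def by blast
    have "\<forall>y. \<exists>t. wf_term G t \<and> W y = cls G S t"
      using W by (metis coord_group_elemE)
    then obtain w where w: "\<forall>y. wf_term G (w y)" and "W = (\<lambda>y. cls G S (w y))"
      by metis
    then show "\<exists>w. (\<forall>y. wf_term G (w y)) \<and>
        (\<forall>t\<in>T. cls G S (subst (case_sum Var w) t) = \<one>\<^bsub>coord_group G S\<^esub>)"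
      using lift eval by auto
  next
    assume "\<exists>w. (\<forall>y. wf_term G (w y)) \<and>
        (\<forall>t\<in>T. cls G S (subst (case_sum Var w) t) = \<one>\<^bsub>coord_group G S\<^esub>)"
    then obtain w where "\<forall>y. wf_term G (w y)"
      and "\<forall>t\<in>T. cls G S (subst (case_sum Var w) t) = \<one>\<^bsub>coord_group G S\<^esub>"
      by blast
    then show "admits_lift G S T"
      unfolding admits_lift_def using eval
      by (intro exI[of _ "\<lambda>y. cls G S (w y)"]) (simp add: cls_in_carrier)
  qed
qed

lemma solution_extends_by_lift:
  assumes T: "\<forall>t\<in>T. wf_term G t" and w: "\<forall>y. wf_term G (w y)"
    and lift: "\<forall>t\<in>T. cls G S (subst (case_sum Var w) t) = \<one>\<^bsub>coord_group G S\<^esub>"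
    and U: "is_solution G S U"
  shows "is_solution G (union_sys S T) (case_sum U (\<lambda>y. geval G id U (w y)))"
proof -
  have "wf_term G (subst (case_sum Var w) t)" if "t \<in> T" for t
    using that T w by (auto intro: wf_term_subst split: sum.split)
  then have "geval G id U (subst (case_sum Var w) t) = \<one>" if "t \<in> T" for t
    using that lift U by (simp add: cls_eq_one_iff)
  then have "geval G id (case_sum U (\<lambda>y. geval G id U (w y))) t = \<one>" if "t \<in> T" for t
    using that by (simp add: geval_subst)
  then show ?thesis
    using U w by (simp add: is_solution_union_sys_iff comp_def geval_solution_closed)
qed

lemma compatible_if_admits_lift:
  assumes T: "\<forall>t\<in>T. wf_term G t" and "admits_lift G S T"
  shows "compatible G S T"
  unfolding compatible_def
proof (intro allI impI)
  fix U assume U: "is_solution G S U"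
  obtain w where w: "\<forall>y. wf_term G (w y)"
    and lift: "\<forall>t\<in>T. cls G S (subst (case_sum Var w) t) = \<one>\<^bsub>coord_group G S\<^esub>"
    using assms admits_lift_iff by blast
  from solution_extends_by_lift[OF T w lift U]
  show "\<exists>V. (\<forall>y. V y \<in> carrier G) \<and> (\<forall>t\<in>T. geval G id (case_sum U V) t = \<one>)"
    unfolding is_solution_union_sys_iff by auto
qed

lemma retraction_if_admits_lift:
  assumes T: "\<forall>t\<in>T. wf_term G t" and "admits_lift G S T"
  shows "\<exists>\<phi>\<in>hom (coord_group G (union_sys S T)) (coord_group G S).
           \<forall>A\<in>carrier (coord_group G S). \<phi> (canon_map G S T A) = A"
proof -
  obtain w where w: "\<forall>y. wf_term G (w y)"
    and lift: "\<forall>t\<in>T. cls G S (subst (case_sum Var w) t) = \<one>\<^bsub>coord_group G S\<^esub>"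
    using assms admits_lift_iff by blast
  let ?f = "case_sum Var w"
  have f: "\<And>z. wf_term G (?f z)"
    using w by (simp split: sum.split)
  have pullback: "is_solution G (union_sys S T) (\<lambda>z. geval G id U (?f z))"
    if "is_solution G S U" for U
    using solution_extends_by_lift[OF T w lift that] by simp
  have "induced_map G (union_sys S T) S ?f (canon_map G S T A) = A"
    if A: "A \<in> carrier (coord_group G S)" for A
  proof -
    obtain a where "wf_term G a" "A = cls G S a"
      using A by (rule coord_group_elemE)
    then show ?thesis
      by (simp add: canon_map_cls induced_map_cls[OF pullback f] wf_term_subst subst_subst)
  qed
  then show ?thesis
    using induced_map_hom[OF pullback f] by blast
qed

lemma admits_lift_if_retraction:
  assumes T: "\<forall>t\<in>T. wf_term G t"
    and \<phi>: "\<phi> \<in> hom (coord_group G (union_sys S T)) (coord_group G S)"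
    and retraction: "\<forall>A\<in>carrier (coord_group G S). \<phi> (canon_map G S T A) = A"
  shows "admits_lift G S T"
proof -
  let ?S' = "union_sys S T"
  have "\<forall>y. \<exists>t. wf_term G t \<and> \<phi> (cls G ?S' (Var (Inr y))) = cls G S t"
    using \<phi> by (metis coord_group_elemE hom_in_carrier cls_in_carrier wf_term.simps(2))
  then obtain w where w: "\<forall>y. wf_term G (w y)"
    and w_image: "\<And>y. \<phi> (cls G ?S' (Var (Inr y))) = cls G S (w y)"
    by metis
  have fixes_X: "\<phi> (cls G ?S' (subst (Var \<circ> Inl) a)) = cls G S a" if "wf_term G a" for a
    using that retraction by (simp add: canon_map_cls[symmetric] cls_in_carrier)
  have "\<phi> (cls G ?S' t) = cls G S (subst (case_sum Var w) t)" if "wf_term G t" for t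
  proof (rule hom_coord_group_cls_subst[OF \<phi>])
    show "\<phi> (cls G ?S' (Const g)) = cls G S (Const g)" if "g \<in> carrier G" for g
      using fixes_X[of "Const g"] that by simp
    show "\<phi> (cls G ?S' (Var z)) = cls G S (case_sum Var w z)" for z
      using fixes_X[of "Var x" for x] w_image by (cases z) simp_all
  qed (use w that in \<open>simp_all split: sum.split\<close>)
  moreover have "\<phi> (cls G ?S' t) = \<one>\<^bsub>coord_group G S\<^esub>" if "t \<in> T" for t
  proof -
    interpret \<phi>: group_hom "coord_group G ?S'" "coord_group G S" \<phi>
      using \<phi> by (simp add: group_hom_def group_hom_axioms_def group_coord_group)
    have "cls G ?S' t = \<one>\<^bsub>coord_group G ?S'\<^esub>"
      using that T by (simp add: cls_eq_one_iff is_solution_def union_sys_def)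
    then show ?thesis by simp
  qed
  ultimately have "\<forall>t\<in>T. cls G S (subst (case_sum Var w) t) = \<one>\<^bsub>coord_group G S\<^esub>"
    using T by auto
  with w show ?thesis
    using admits_lift_iff[OF T] by blast
qed

end

theorem mainTheorem9:
  fixes G :: "('g, 'b) monoid_scheme"
    and S :: "('g, 'x) gterm set"
    and T :: "('g, 'x + 'y) gterm set"
  assumes "group G"
    and "\<forall>s\<in>S. wf_term G s"
    and "\<forall>t\<in>T. wf_term G t"
    and "\<exists>U. is_solution G S U"
  shows "(compatible G S T \<and> admits_lift G S T) \<longleftrightarrow>
         (canon_map G S T \<in> hom (coord_group G S) (coord_group G (union_sys S T)) \<and>
          inj_on (canon_map G S T) (carrier (coord_group G S)) \<and>
          (\<exists>\<phi> \<in> hom (coord_group G (union_sys S T)) (coord_group G S).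
             \<forall>A \<in> carrier (coord_group G S). \<phi> (canon_map G S T A) = A))"
proof -
  interpret group G by fact
  show ?thesis
  proof
    assume "compatible G S T \<and> admits_lift G S T"
    then obtain \<phi> where \<phi>: "\<phi> \<in> hom (coord_group G (union_sys S T)) (coord_group G S)"
      and retraction: "\<forall>A\<in>carrier (coord_group G S). \<phi> (canon_map G S T A) = A"
      using retraction_if_admits_lift[OF assms(3)] by blast
    have "inj_on (canon_map G S T) (carrier (coord_group G S))"
      by (rule inj_on_inverseI[where g = \<phi>]) (simp add: retraction)
    with \<phi> retraction show "canon_map G S T \<in> hom (coord_group G S) (coord_group G (union_sys S T)) \<and>
        inj_on (canon_map G S T) (carrier (coord_group G S)) \<and>
        (\<exists>\<phi> \<in> hom (coord_group G (union_sys S T)) (coord_group G S).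
           \<forall>A \<in> carrier (coord_group G S). \<phi> (canon_map G S T A) = A)"
      using canon_map_hom by blast
  next
    assume "canon_map G S T \<in> hom (coord_group G S) (coord_group G (union_sys S T)) \<and>
        inj_on (canon_map G S T) (carrier (coord_group G S)) \<and>
        (\<exists>\<phi> \<in> hom (coord_group G (union_sys S T)) (coord_group G S).
           \<forall>A \<in> carrier (coord_group G S). \<phi> (canon_map G S T A) = A)"
    then have "admits_lift G S T"
      using admits_lift_if_retraction[OF assms(3)] by blast
    with compatible_if_admits_lift[OF assms(3)] show "compatible G S T \<and> admits_lift G S T"
      by blast
  qed
qed

end
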